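(* Let $d\ge3$, $\lambda\in\mathbb{R}$, $x\in\mathbb{R}^N$, and $\mathcal{Y}=\lambda x^{\otimes d}+\frac1{\sqrt N}\mathcal{W}$ with $\mathcal{W}\in\mathcal{S}^d(N)$. Let $(\mu,u)$ be an eigenpair of $\mathcal{Y}$ with $\mu\neq0$ such that $\mu/(d-1)$ is not an eigenvalue of $\mathcal{Y}\cdot u^{d-2}$. Then, locally around $\mathcal{W}$, $(\mu,u)$ is a continuously differentiable function of the independent entries of $\mathcal{W}$, and for each index tuple $\boldsymbol i=(i_1,\dots,i_d)$, $$\frac{\partial\mu}{\partial W_{\boldsymbol i}}=\frac{1}{\sigma^2_{\boldsymbol i}\sqrt N}\prod_{j=1}^d u_{i_j},\qquad \frac{\partial u}{\partial W_{\boldsymbol i}}=-\frac{1}{(d-1)\sqrt N}\bar R\,\phi+\frac{1}{(d-2)\mu}\frac{\partial\mu}{\partial W_{\boldsymbol i}}\,u,$$ where $\bar R=\left(\mathcal{Y}\cdot u^{d-2}-\frac{\mu}{d-1}I\right)^{-1}$ and $\phi\in\mathbb{R}^N$ is given by $\sigma^2_{\boldsymbol i}\,\phi=\frac1d\sum_{j=1}^d\Big(\prod_{k\neq j}u_{i_k}\Big)e^{(i_j)}$, with $e^{(n)}$ the $n$-th canonical basis vector.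
   Context: $\mathcal{S}^d(N)$ is the space of real symmetric $d$-th order $N\times\cdots\times N$ tensors, parametrized by its independent entries $W_{\boldsymbol i}$ (one per multiset of indices); $\mathcal{Y}\cdot u^p$ is the $p$-fold contraction $(\mathcal{Y}\cdot u^p)_{i_{p+1}\dots i_d}=\sum_{i_1,\dots,i_p}Y_{i_1\dots i_d}u_{i_1}\cdots u_{i_p}$. An eigenpair $(\mu,u)$ of $\mathcal{Y}$ satisfies $\mathcal{Y}\cdot u^{d-1}=\mu u$, $\|u\|=1$. $\sigma^2_{\boldsymbol i}$ denotes the reciprocal of the number of distinct permutations of $(i_1,\dots,i_d)$ (the variance of $W_{\boldsymbol i}$ under the Gaussian orthogonal tensor ensemble, the law with density proportional to $e^{-\frac12\|\mathcal{W}\|_F^2}$). *)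

theory Defs
  imports "HOL-Analysis.Analysis" "HOL-Library.Multiset"
begin

text \<open>Index tuples (i_1,...,i_d) are lists over the finite index type 'n of length d.  The independent entries of a symmetric
  tensor are indexed by multisets of size d; we use an arbitrary finite type 'm together
  with a bijection enum : 'm -> {multisets of size d}, so that the parameter space
  (independent entries of W) is the Euclidean space real^'m.\<close>

definition idx :: "('m \<Rightarrow> 'n multiset) \<Rightarrow> 'n list \<Rightarrow> 'm" where
  "idx enum i = inv enum (mset i)"

definition W_entry :: "('m \<Rightarrow> 'n multiset) \<Rightarrow> real^'m \<Rightarrow> 'n list \<Rightarrow> real" where
  "W_entry enum w i = w $ idx enum i"

definition spiked_tensor ::
  "real \<Rightarrow> real^'n::finite \<Rightarrow> ('m \<Rightarrow> 'n multiset) \<Rightarrow> real^'m \<Rightarrow> 'n list \<Rightarrow> real" where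
  "spiked_tensor lam x enum w i =
     lam * (\<Prod>j\<leftarrow>i. x $ j) + W_entry enum w i / sqrt (real CARD('n))"

definition tcontr_vec :: "nat \<Rightarrow> ('n::finite list \<Rightarrow> real) \<Rightarrow> real^'n \<Rightarrow> real^'n" where
  "tcontr_vec d T u = (\<chi> a. \<Sum>is\<in>{is. length is = d - 1}. T (is @ [a]) * (\<Prod>j\<leftarrow>is. u $ j))"

definition tcontr_mat :: "nat \<Rightarrow> ('n::finite list \<Rightarrow> real) \<Rightarrow> real^'n \<Rightarrow> real^'n^'n" where
  "tcontr_mat d T u = (\<chi> a b. \<Sum>is\<in>{is. length is = d - 2}. T (is @ [a, b]) * (\<Prod>j\<leftarrow>is. u $ j))"

definition is_eigenpair :: "nat \<Rightarrow> ('n::finite list \<Rightarrow> real) \<Rightarrow> real \<Rightarrow> real^'n \<Rightarrow> bool" where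
  "is_eigenpair d T mu u \<longleftrightarrow> tcontr_vec d T u = mu *\<^sub>R u \<and> norm u = 1"

definition is_eigenvalue :: "real^'n^'n \<Rightarrow> real \<Rightarrow> bool" where
  "is_eigenvalue A c \<longleftrightarrow> (\<exists>v. v \<noteq> 0 \<and> A *v v = c *\<^sub>R v)"

definition sigma2 :: "'n list \<Rightarrow> real" where
  "sigma2 i = 1 / real (card {js. mset js = mset i})"

definition phi_vec :: "nat \<Rightarrow> real^'n::finite \<Rightarrow> 'n list \<Rightarrow> real^'n" where
  "phi_vec d u i = (1 / (real d * sigma2 i)) *\<^sub>R
     (\<Sum>j<d. (\<Prod>k\<in>{..<d} - {j}. u $ (i ! k)) *\<^sub>R axis (i ! j) 1)"

end

theory Submission
  imports Defs "HOL-Combinatorics.Multiset_Permutations"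
begin

(* The eigenpair equations  Y(W) . u^(d-1) = mu u,  u . u = 1  define (mu, u) implicitly in terms
   of W.  Their derivative in (mu, u) is  (hmu, hu) |-> (2 u . hu, (d-1) M hu - mu hu - hmu u)  with
   M = Y . u^(d-2), a symmetric matrix having u as eigenvector for mu.  Pairing with u kills the M-term,
   so the derivative is injective exactly when mu/(d-1) is not an eigenvalue of M, and the implicit
   function theorem (obtained from the inverse function theorem) yields a C^1 branch of eigenpairs.
   Differentiating along the coordinate W_i and pairing with u gives the derivative of mu; the
   remaining equation is solved by the resolvent of M at mu/(d-1).  The factor 1/sigma_i^2 counts
   the positions of the tensor in which the independent entry W_i occurs. *)

section \<open>Contractions of symmetric tensors\<close>

definition symmetric_tensor :: "('n list \<Rightarrow> real) \<Rightarrow> bool" where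
  "symmetric_tensor T \<longleftrightarrow> (\<forall>xs ys. mset xs = mset ys \<longrightarrow> T xs = T ys)"

definition contract :: "nat \<Rightarrow> ('n::finite list \<Rightarrow> real) \<Rightarrow> real^'n \<Rightarrow> 'n list \<Rightarrow> real" where
  "contract n T u s = (\<Sum>is\<in>{is. length is = n}. T (is @ s) * (\<Prod>j\<leftarrow>is. u $ j))"

lemma finite_lists_length: "finite {is::'n::finite list. length is = n}"
  using finite_lists_length_eq[of "UNIV::'n set" n] by simp

lemma sum_lists_length_Suc:
  "(\<Sum>is\<in>{is::'n::finite list. length is = Suc n}. f is)
     = (\<Sum>j\<in>UNIV. \<Sum>is\<in>{is. length is = n}. f (j # is))"
proof -
  have lists: "{is::'n list. length is = Suc n} = (\<lambda>(j, is). j # is) ` (UNIV \<times> {is. length is = n})"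
    by (auto simp: length_Suc_conv image_iff)
  have "inj_on (\<lambda>(j, is). j # is) (UNIV \<times> {is::'n list. length is = n})"
    by (auto simp: inj_on_def)
  then show ?thesis
    unfolding lists by (simp add: sum.reindex sum.cartesian_product split_def)
qed

lemma contract_0 [simp]: "contract 0 T u s = T s"
  by (simp add: contract_def)

lemma contract_mset_cong:
  "symmetric_tensor T \<Longrightarrow> mset s = mset s' \<Longrightarrow> contract n T u s = contract n T u s'"
  unfolding contract_def symmetric_tensor_def by (intro sum.cong refl) (metis mset_append)

lemma contract_Suc:
  assumes "symmetric_tensor T"
  shows "contract (Suc n) T u s = (\<Sum>j\<in>UNIV. u $ j * contract n T u (j # s))"
proof -
  have "T ((j # is) @ s) = T (is @ j # s)" for j "is"
    using assms unfolding symmetric_tensor_def by simp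
  then show ?thesis
    unfolding contract_def sum_lists_length_Suc by (simp add: sum_distrib_left algebra_simps)
qed

lemma contract_swap:
  "symmetric_tensor T \<Longrightarrow> contract n T u [a, b] = contract n T u [b, a]"
  by (rule contract_mset_cong) auto

lemma tcontr_vec_eq_contract: "tcontr_vec d T u = (\<chi> a. contract (d - 1) T u [a])"
  unfolding tcontr_vec_def contract_def by simp

lemma tcontr_mat_eq_contract: "tcontr_mat d T u = (\<chi> a b. contract (d - 2) T u [a, b])"
  unfolding tcontr_mat_def contract_def by simp

lemma tcontr_mat_mult_self:
  assumes "symmetric_tensor T" and "d \<ge> 2"
  shows "tcontr_mat d T u *v u = tcontr_vec d T u"
proof -
  have "d - 1 = Suc (d - 2)" using assms(2) by simp
  then show ?thesis
    by (simp add: tcontr_mat_eq_contract tcontr_vec_eq_contract contract_Suc[OF assms(1)]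
        vec_eq_iff matrix_vector_mult_def contract_swap[OF assms(1)] mult.commute)
qed

lemma inner_tcontr_vec:
  assumes "symmetric_tensor T" and "d \<ge> 1"
  shows "u \<bullet> tcontr_vec d T u = contract d T u []"
proof -
  have "contract d T u [] = contract (Suc (d - 1)) T u []" using assms(2) by simp
  then show ?thesis
    by (simp add: tcontr_vec_eq_contract inner_vec_def contract_Suc[OF assms(1)])
qed

lemma symmetric_spiked_tensor: "symmetric_tensor (spiked_tensor lam x enum w)"
  unfolding symmetric_tensor_def spiked_tensor_def W_entry_def idx_def
  by (metis mset_map prod_mset_prod_list)

lemma symmetric_W_entry: "symmetric_tensor (W_entry enum w)"
  unfolding symmetric_tensor_def W_entry_def idx_def by simp

lemma transpose_tcontr_mat:
  "symmetric_tensor T \<Longrightarrow> transpose (tcontr_mat d T u) = tcontr_mat d T u"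
  by (simp add: transpose_def vec_eq_iff tcontr_mat_eq_contract contract_swap)

lemma tcontr_vec_zero_tensor [simp]: "tcontr_vec d (\<lambda>xs. 0) u = 0"
  by (simp add: tcontr_vec_def vec_eq_iff)

section \<open>Continuously differentiable maps\<close>

(* Continuity of the derivative is required direction by direction, which in finite dimensions
   is the same as continuity in operator norm. *)
definition C1 :: "('a::real_normed_vector \<Rightarrow> 'b::real_normed_vector) \<Rightarrow> ('a \<Rightarrow> 'a \<Rightarrow> 'b) \<Rightarrow> bool" where
  "C1 f f' \<longleftrightarrow> (\<forall>z. (f has_derivative f' z) (at z)) \<and> (\<forall>h. continuous_on UNIV (\<lambda>z. f' z h))"

lemma C1_continuous_on: "C1 f f' \<Longrightarrow> continuous_on UNIV f"
  unfolding C1_def by (meson continuous_at_imp_continuous_on has_derivative_continuous)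

lemma C1_cong: "C1 f f' \<Longrightarrow> (\<And>z. f z = g z) \<Longrightarrow> (\<And>z h. f' z h = g' z h) \<Longrightarrow> C1 g g'"
proof -
  assume "C1 f f'" "\<And>z. f z = g z" "\<And>z h. f' z h = g' z h"
  moreover from this have "f = g" "f' = g'" by (auto intro!: ext)
  ultimately show ?thesis by simp
qed

lemma C1_const: "C1 (\<lambda>z. c) (\<lambda>z h. 0)"
  unfolding C1_def by auto

lemma C1_linear: "bounded_linear L \<Longrightarrow> C1 L (\<lambda>z. L)"
  unfolding C1_def by (auto intro: bounded_linear_imp_has_derivative)

lemma C1_add: "C1 f f' \<Longrightarrow> C1 g g' \<Longrightarrow> C1 (\<lambda>z. f z + g z) (\<lambda>z h. f' z h + g' z h)"
  unfolding C1_def by (auto intro!: derivative_eq_intros continuous_intros)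

lemma C1_diff: "C1 f f' \<Longrightarrow> C1 g g' \<Longrightarrow> C1 (\<lambda>z. f z - g z) (\<lambda>z h. f' z h - g' z h)"
  unfolding C1_def by (auto intro!: derivative_eq_intros continuous_intros)

lemma C1_scaleR:
  fixes f :: "'a::real_normed_vector \<Rightarrow> real" and g :: "'a \<Rightarrow> 'b::real_normed_vector"
  assumes "C1 f f'" and "C1 g g'"
  shows "C1 (\<lambda>z. f z *\<^sub>R g z) (\<lambda>z h. f z *\<^sub>R g' z h + f' z h *\<^sub>R g z)"
  using assms C1_continuous_on[OF assms(1)] C1_continuous_on[OF assms(2)] unfolding C1_def
  by (auto intro!: derivative_eq_intros continuous_intros)

lemma C1_mult:
  fixes f :: "'a::real_normed_vector \<Rightarrow> real"
  shows "C1 f f' \<Longrightarrow> C1 g g' \<Longrightarrow> C1 (\<lambda>z. f z * g z) (\<lambda>z h. f z * g' z h + f' z h * g z)"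
  using C1_scaleR[of f f' g g'] by simp

lemma C1_sum:
  "finite A \<Longrightarrow> (\<And>a. a \<in> A \<Longrightarrow> C1 (f a) (f' a)) \<Longrightarrow>
   C1 (\<lambda>z. \<Sum>a\<in>A. f a z) (\<lambda>z h. \<Sum>a\<in>A. f' a z h)"
  unfolding C1_def by (auto intro!: derivative_eq_intros continuous_intros)

lemma C1_Pair: "C1 f f' \<Longrightarrow> C1 g g' \<Longrightarrow> C1 (\<lambda>z. (f z, g z)) (\<lambda>z h. (f' z h, g' z h))"
  unfolding C1_def by (auto intro!: derivative_eq_intros continuous_intros)

lemma C1_vec_lambda:
  fixes f :: "'n::finite \<Rightarrow> 'a::real_normed_vector \<Rightarrow> real"
  assumes "\<And>a. C1 (f a) (f' a)"
  shows "C1 (\<lambda>z. \<chi> a. f a z) (\<lambda>z h. \<chi> a. f' a z h)"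
proof -
  have vec_sum: "(\<chi> a. g a) = (\<Sum>a\<in>UNIV. g a *\<^sub>R (axis a 1 :: real^'n))" for g
    by (simp add: vec_eq_iff axis_def sum_component if_distrib cong: if_cong)
  have "C1 (\<lambda>z. \<Sum>a\<in>UNIV. f a z *\<^sub>R (axis a 1 :: real^'n))
           (\<lambda>z h. \<Sum>a\<in>UNIV. f a z *\<^sub>R 0 + f' a z h *\<^sub>R (axis a 1 :: real^'n))"
    by (intro C1_sum C1_scaleR assms C1_const) simp
  then show ?thesis
    by (rule C1_cong) (simp_all add: vec_sum)
qed

lemma C1_contract:
  fixes T :: "'a::real_normed_vector \<Rightarrow> 'n::finite list \<Rightarrow> real"
  assumes "\<And>z. symmetric_tensor (T z)" and "\<And>h. symmetric_tensor (T' h)"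
    and "\<And>xs. C1 (\<lambda>z. T z xs) (\<lambda>z h. T' h xs)" and U: "bounded_linear U"
  shows "C1 (\<lambda>z. contract n (T z) (U z) s)
    (\<lambda>z h. contract n (T' h) (U z) s + real n * (\<Sum>b\<in>UNIV. U h $ b * contract (n - 1) (T z) (U z) (b # s)))"
proof (induction n arbitrary: s)
  case 0
  show ?case using assms(3) by simp
next
  case (Suc n)
  have Uj: "C1 (\<lambda>z. U z $ j) (\<lambda>z h. U h $ j)" for j
    by (intro C1_linear bounded_linear_compose[OF bounded_linear_vec_nth U])
  have swap: "(\<Sum>j\<in>UNIV. U z $ j * (real n * (\<Sum>b\<in>UNIV. U h $ b * contract (n - 1) (T z) (U z) (b # j # s))))
      = real n * (\<Sum>b\<in>UNIV. U h $ b * contract n (T z) (U z) (b # s))" for z h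
  proof (cases n)
    case (Suc m)
    have pair_swap: "contract m (T z) (U z) (b # j # s) = contract m (T z) (U z) (j # b # s)" for b j
      by (rule contract_mset_cong[OF assms(1)]) simp
    have "(\<Sum>j\<in>UNIV. U z $ j * (real n * (\<Sum>b\<in>UNIV. U h $ b * contract m (T z) (U z) (b # j # s))))
        = real n * (\<Sum>j\<in>UNIV. \<Sum>b\<in>UNIV. U h $ b * (U z $ j * contract m (T z) (U z) (j # b # s)))"
      by (simp add: sum_distrib_left pair_swap mult.left_commute)
    also have "\<dots> = real n * (\<Sum>b\<in>UNIV. U h $ b * contract n (T z) (U z) (b # s))"
      by (subst sum.swap) (simp add: Suc contract_Suc[OF assms(1)] sum_distrib_left)
    finally show ?thesis by (simp add: Suc)
  qed simp
  show ?case
  proof (rule C1_cong[OF C1_sum[OF finite_class.finite_UNIV C1_mult[OF Uj Suc.IH]]])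
    show "(\<Sum>j\<in>UNIV. U z $ j * contract n (T z) (U z) (j # s)) = contract (Suc n) (T z) (U z) s" for z
      by (simp add: contract_Suc[OF assms(1)])
    show "(\<Sum>j\<in>UNIV. U z $ j * (contract n (T' h) (U z) (j # s)
            + real n * (\<Sum>b\<in>UNIV. U h $ b * contract (n - 1) (T z) (U z) (b # j # s)))
          + U h $ j * contract n (T z) (U z) (j # s))
        = contract (Suc n) (T' h) (U z) s
          + real (Suc n) * (\<Sum>b\<in>UNIV. U h $ b * contract (Suc n - 1) (T z) (U z) (b # s))" for z h
      using swap[of z h]
      by (simp add: contract_Suc[OF assms(2)] sum.distrib distrib_left algebra_simps)
  qed
qed

lemma C1_inner:
  assumes "C1 f f'" and "C1 g g'"
  shows "C1 (\<lambda>z. f z \<bullet> g z) (\<lambda>z h. f z \<bullet> g' z h + f' z h \<bullet> g z)"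
  using assms C1_continuous_on[OF assms(1)] C1_continuous_on[OF assms(2)] unfolding C1_def
  by (auto intro!: derivative_eq_intros continuous_intros)

section \<open>The eigenpair equations\<close>

definition eigen_equation ::
  "real \<Rightarrow> real^'n::finite \<Rightarrow> ('m::finite \<Rightarrow> 'n multiset) \<Rightarrow> nat \<Rightarrow> (real^'m) \<times> real \<times> (real^'n) \<Rightarrow> real \<times> (real^'n)"
  where "eigen_equation lam x enum d =
    (\<lambda>(w, mu, u). (u \<bullet> u, tcontr_vec d (spiked_tensor lam x enum w) u - mu *\<^sub>R u))"

(* By symmetry of the tensor, each of the d - 1 copies of u in  Y . u^(d-1)  contributes the
   same term  (Y . u^(d-2)) hu. *)
definition eigen_equation_deriv ::
  "real \<Rightarrow> real^'n::finite \<Rightarrow> ('m::finite \<Rightarrow> 'n multiset) \<Rightarrow> nat \<Rightarrow> (real^'m) \<times> real \<times> (real^'n)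
    \<Rightarrow> (real^'m) \<times> real \<times> (real^'n) \<Rightarrow> real \<times> (real^'n)"
  where "eigen_equation_deriv lam x enum d = (\<lambda>(w, mu, u) (hw, hmu, hu).
    (2 * (u \<bullet> hu),
     (real d - 1) *\<^sub>R (tcontr_mat d (spiked_tensor lam x enum w) u *v hu)
       + tcontr_vec d (W_entry enum hw) u /\<^sub>R sqrt (real CARD('n)) - (mu *\<^sub>R hu + hmu *\<^sub>R u)))"

lemma is_eigenpair_iff_eigen_equation:
  "is_eigenpair d (spiked_tensor lam x enum w) mu u \<longleftrightarrow> eigen_equation lam x enum d (w, mu, u) = (1, 0)"
  by (auto simp: is_eigenpair_def eigen_equation_def norm_eq_1)

lemma tcontr_vec_divide:
  "tcontr_vec d (\<lambda>xs. T xs / c) u = tcontr_vec d T u /\<^sub>R c"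
  by (simp add: tcontr_vec_def vec_eq_iff sum_distrib_left divide_inverse mult_ac)

lemma C1_eigen_equation:
  fixes x :: "real^'n::finite" and enum :: "'m::finite \<Rightarrow> 'n multiset"
  assumes "d \<ge> 2"
  shows "C1 (eigen_equation lam x enum d) (eigen_equation_deriv lam x enum d)"
proof -
  let ?N = "sqrt (real CARD('n))"
  let ?Y = "\<lambda>z::(real^'m) \<times> real \<times> (real^'n). spiked_tensor lam x enum (fst z)"
  let ?U = "\<lambda>z::(real^'m) \<times> real \<times> (real^'n). snd (snd z)"
  have U: "bounded_linear ?U"
    by (intro bounded_linear_compose[OF bounded_linear_snd] bounded_linear_snd)
  have mu: "bounded_linear (\<lambda>z::(real^'m) \<times> real \<times> (real^'n). fst (snd z))"
    by (intro bounded_linear_compose[OF bounded_linear_fst] bounded_linear_snd)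
  have entry: "C1 (\<lambda>z. ?Y z xs) (\<lambda>z h. W_entry enum (fst h) xs / ?N)" for xs
  proof (rule C1_cong[OF C1_add[OF C1_const C1_linear]])
    show "bounded_linear (\<lambda>z::(real^'m) \<times> real \<times> (real^'n). W_entry enum (fst z) xs / ?N)"
      unfolding W_entry_def by (intro bounded_linear_compose[OF bounded_linear_divide]
          bounded_linear_compose[OF bounded_linear_vec_nth] bounded_linear_fst)
  qed (simp_all add: spiked_tensor_def)
  have d1: "real (d - Suc 0) = real d - 1" "d - Suc (Suc 0) = d - 2" using assms by auto
  have contraction: "C1 (\<lambda>z. tcontr_vec d (?Y z) (?U z))
     (\<lambda>z h. (real d - 1) *\<^sub>R (tcontr_mat d (?Y z) (?U z) *v ?U h)
            + tcontr_vec d (W_entry enum (fst h)) (?U z) /\<^sub>R ?N)"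
    unfolding tcontr_vec_eq_contract
  proof (rule C1_cong[OF C1_vec_lambda[OF C1_contract[OF _ _ entry U]]])
    show "symmetric_tensor (\<lambda>xs. W_entry enum (fst h) xs / ?N)" for h
      using symmetric_W_entry unfolding symmetric_tensor_def by metis
    show "(\<chi> a. contract (d - 1) (\<lambda>xs. W_entry enum (fst h) xs / ?N) (?U z) [a]
            + real (d - 1) * (\<Sum>b\<in>UNIV. ?U h $ b * contract (d - 1 - 1) (?Y z) (?U z) [b, a]))
          = (real d - 1) *\<^sub>R (tcontr_mat d (?Y z) (?U z) *v ?U h)
            + (\<chi> a. contract (d - 1) (W_entry enum (fst h)) (?U z) [a]) /\<^sub>R ?N" for z h
      using tcontr_vec_divide[of d "W_entry enum (fst h)" ?N "?U z"]
      by (simp add: vec_eq_iff tcontr_vec_eq_contract tcontr_mat_eq_contract d1 matrix_vector_mult_def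
          contract_swap[OF symmetric_spiked_tensor, of _ _ _ _ _ _ b a for a b] mult.commute)
  qed (simp_all add: symmetric_spiked_tensor)
  have "C1 (\<lambda>z. (?U z \<bullet> ?U z, tcontr_vec d (?Y z) (?U z) - fst (snd z) *\<^sub>R ?U z))
     (\<lambda>z h. (?U z \<bullet> ?U h + ?U h \<bullet> ?U z,
       (real d - 1) *\<^sub>R (tcontr_mat d (?Y z) (?U z) *v ?U h) + tcontr_vec d (W_entry enum (fst h)) (?U z) /\<^sub>R ?N
       - (fst (snd z) *\<^sub>R ?U h + fst (snd h) *\<^sub>R ?U z)))"
    by (intro C1_Pair C1_inner C1_diff C1_scaleR C1_linear U mu contraction)
  then show ?thesis
    by (rule C1_cong) (auto simp: eigen_equation_def eigen_equation_deriv_def split_beta inner_commute)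
qed

section \<open>Derivatives along a coordinate of the noise\<close>

lemma prod_list_map_eq_prod_mset: "(\<Prod>j\<leftarrow>xs. f j) = prod_mset (image_mset f (mset xs))"
  by (metis mset_map prod_mset_prod_list)

lemma idx_eq_iff:
  assumes enum: "bij_betw enum UNIV {M. size M = d}" and "length js = d" and "length i = d"
  shows "idx enum js = idx enum i \<longleftrightarrow> mset js = mset i"
proof
  have "mset js \<in> range enum" "mset i \<in> range enum"
    using assms by (simp_all add: bij_betw_imp_surj_on[OF enum])
  then show "idx enum js = idx enum i \<Longrightarrow> mset js = mset i"
    unfolding idx_def by (metis inv_into_injective)
qed (simp add: idx_def)

lemma W_entry_axis_idx:
  assumes "bij_betw enum UNIV {M. size M = d}" and "length js = d" and "length i = d"
  shows "W_entry enum (axis (idx enum i) 1) js = (if mset js = mset i then 1 else 0)"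
  using idx_eq_iff[OF assms] by (simp add: W_entry_def axis_def)

lemma sigma2_eq: "sigma2 i = 1 / real (card (permutations_of_multiset (mset i)))"
  by (simp add: sigma2_def permutations_of_multiset_def)

lemma inner_tcontr_vec_W_entry_axis:
  fixes u :: "real^'n::finite" and enum :: "'m::finite \<Rightarrow> 'n multiset"
  assumes enum: "bij_betw enum UNIV {M. size M = d}" and i: "length i = d" and "d \<ge> 1"
  shows "u \<bullet> tcontr_vec d (W_entry enum (axis (idx enum i) 1)) u = (\<Prod>j\<leftarrow>i. u $ j) / sigma2 i"
proof -
  let ?P = "\<lambda>js. \<Prod>j\<leftarrow>js. u $ j"
  have "u \<bullet> tcontr_vec d (W_entry enum (axis (idx enum i) 1)) u
      = (\<Sum>js\<in>{js. length js = d}. if mset js = mset i then ?P i else 0)"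
    unfolding inner_tcontr_vec[OF symmetric_W_entry \<open>d \<ge> 1\<close>] contract_def append_Nil2
    by (intro sum.cong refl) (auto simp: W_entry_axis_idx[OF enum _ i] prod_list_map_eq_prod_mset)
  also have "\<dots> = (\<Sum>js\<in>permutations_of_multiset (mset i). ?P i)"
  proof -
    have perms: "{js \<in> {js. length js = d}. mset js = mset i} = permutations_of_multiset (mset i)"
      using i by (auto simp: permutations_of_multiset_def dest: mset_eq_length)
    show ?thesis
      by (simp only: sum.inter_filter[OF finite_lists_length, symmetric] perms)
  qed
  finally show ?thesis by (simp add: sigma2_eq)
qed

lemma prod_remove_nth:
  assumes "j < length i"
  shows "(\<Prod>k\<in>{..<length i} - {j}. f (i ! k)) = prod_mset (image_mset f (mset i - {#i ! j#}))"
proof -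
  have "image_mset (\<lambda>k. f (i ! k)) (mset_set {..<length i}) = image_mset f (mset i)"
  proof -
    have "image_mset (\<lambda>k. f (i ! k)) (mset_set {..<length i}) = mset (map f (map (nth i) [0..<length i]))"
      by (simp add: mset_set_upto_eq_mset_upto multiset.map_comp o_def)
    then show ?thesis by (simp add: map_nth)
  qed
  moreover have "{#i ! j#} \<subseteq># mset i" using assms by (simp add: nth_mem)
  ultimately show ?thesis
    using assms by (simp add: prod_unfold_prod_mset mset_set_Diff image_mset_Diff)
qed

lemma phi_vec_nth:
  assumes i: "length i = d"
  shows "phi_vec d u i $ a
    = real (count (mset i) a) * prod_mset (image_mset (($) u) (mset i - {#a#})) / (real d * sigma2 i)"
proof -
  let ?Q = "prod_mset (image_mset (($) u) (mset i - {#a#}))"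
  have "phi_vec d u i $ a
      = (\<Sum>j<d. if a = i ! j then \<Prod>k\<in>{..<d} - {j}. u $ (i ! k) else 0) / (real d * sigma2 i)"
    by (simp add: phi_vec_def sum_component axis_def if_distrib cong: if_cong)
  also have "(\<Sum>j<d. if a = i ! j then \<Prod>k\<in>{..<d} - {j}. u $ (i ! k) else 0)
      = (\<Sum>j\<in>{j. j < d \<and> a = i ! j}. ?Q)"
    using i by (subst sum.inter_filter[symmetric]) (auto simp: prod_remove_nth intro: sum.cong)
  also have "\<dots> = real (card {j. j < d \<and> a = i ! j}) * ?Q"
    by (rule sum_constant)
  also have "card {j. j < d \<and> a = i ! j} = count (mset i) a"
    using i by (simp add: count_mset count_list_eq_length_filter length_filter_conv_card eq_commute)
  finally show ?thesis .
qed

lemma tcontr_vec_W_entry_axis_nth: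
  fixes u :: "real^'n::finite" and enum :: "'m::finite \<Rightarrow> 'n multiset"
  assumes enum: "bij_betw enum UNIV {M. size M = d}" and i: "length i = d" and "d \<ge> 1"
  shows "tcontr_vec d (W_entry enum (axis (idx enum i) 1)) u $ a = phi_vec d u i $ a"
proof -
  let ?M = "mset i"
  let ?Q = "prod_mset (image_mset (($) u) (?M - {#a#}))"
  let ?L = "{js. length js = d - 1 \<and> mset js + {#a#} = ?M}"
  have minus: "mset i - {#a#} = mset js" if "mset js + {#a#} = mset i" for js
    using that by (metis add_diff_cancel_right')
  have "tcontr_vec d (W_entry enum (axis (idx enum i) 1)) u $ a
      = (\<Sum>js\<in>{js. length js = d - 1}. if mset js + {#a#} = ?M then ?Q else 0)"
    unfolding tcontr_vec_def using \<open>d \<ge> 1\<close>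
    by (auto simp: minus W_entry_axis_idx[OF enum _ i] prod_list_map_eq_prod_mset intro!: sum.cong)
  also have "\<dots> = real (card ?L) * ?Q"
    by (subst sum.inter_filter[symmetric]) (simp_all add: finite_lists_length)
  also have "\<dots> = phi_vec d u i $ a"
  proof (cases "a \<in># ?M")
    case True
    have "?L = permutations_of_multiset (?M - {#a#})"
      using True i by (auto simp: permutations_of_multiset_def minus size_Diff_singleton
          dest: arg_cong[of _ _ size])
    moreover have "card (permutations_of_multiset ?M) * count ?M a
        = d * card (permutations_of_multiset (?M - {#a#}))"
      using card_permutations_of_multiset_remove_aux[OF True] i by simp
    moreover have "card (permutations_of_multiset ?M) > 0"
      by (simp add: card_gt_0_iff)
    ultimately show ?thesis
      using \<open>d \<ge> 1\<close> by (simp add: phi_vec_nth[OF i] sigma2_eq field_simps flip: of_nat_mult)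
  next
    case False
    have "js \<notin> ?L" for js
    proof
      assume "js \<in> ?L"
      then have "add_mset a (mset js) = ?M" by simp
      then have "a \<in># ?M" by (rule union_single_eq_member)
      with False show False ..
    qed
    then have "?L = {}" by blast
    then have "card ?L = 0" by (simp only: card.empty)
    then show ?thesis using False by (simp add: phi_vec_nth[OF i] not_in_iff)
  qed
  finally show ?thesis .
qed

lemma tcontr_vec_W_entry_axis:
  fixes u :: "real^'n::finite" and enum :: "'m::finite \<Rightarrow> 'n multiset"
  assumes "bij_betw enum UNIV {M. size M = d}" and "length i = d" and "d \<ge> 1"
  shows "tcontr_vec d (W_entry enum (axis (idx enum i) 1)) u = phi_vec d u i"
  using tcontr_vec_W_entry_axis_nth[OF assms] by (simp add: vec_eq_iff)

section \<open>Perturbation of a simple eigenpair\<close>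

lemma inner_matrix_vector_symmetric:
  fixes M :: "real^'n::finite^'n"
  assumes "transpose M = M"
  shows "u \<bullet> (M *v v) = (M *v u) \<bullet> v"
  by (metis assms dot_lmul_matrix transpose_matrix_vector)

lemma matrix_inv_mult_cancel:
  fixes A :: "'a::field^'n::finite^'n"
  assumes "\<And>x. A *v x = 0 \<Longrightarrow> x = 0"
  shows "matrix_inv A *v (A *v v) = v"
proof -
  have "invertible A"
    using assms matrix_left_invertible_ker invertible_left_inverse by blast
  then have "A ** matrix_inv A = mat 1 \<and> matrix_inv A ** A = mat 1"
    unfolding matrix_inv_def invertible_def by (rule someI_ex)
  then show ?thesis by (simp add: matrix_vector_mul_assoc)
qed

lemma eigenpair_perturbation:
  fixes M :: "real^'n::finite^'n"
  assumes sym: "transpose M = M" and Mu: "M *v u = mu *\<^sub>R u" and unit: "u \<bullet> u = 1"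
    and p: "p \<noteq> 0" and simple: "\<not> is_eigenvalue M (mu / p)"
    and eq: "p *\<^sub>R (M *v v) + g - (mu *\<^sub>R v + m *\<^sub>R u) = 0" and orth: "u \<bullet> v = 0"
  shows "m = u \<bullet> g"
    and "v = - (1 / p) *\<^sub>R (matrix_inv (M - (mu / p) *\<^sub>R mat 1) *v g) + (m / ((p - 1) * mu)) *\<^sub>R u"
proof -
  define c where "c = mu / p"
  define A where "A = M - c *\<^sub>R mat 1"
  define R where "R = matrix_inv A"
  have A_mult: "A *v w = M *v w - c *\<^sub>R w" for w
    by (simp add: A_def matrix_vector_mult_diff_rdistrib flip: scaleR_matrix_vector_assoc)
  have A_inj: "w = 0" if "A *v w = 0" for w
    using simple that unfolding is_eigenvalue_def c_def A_mult by force
  have R_A: "R *v (A *v w) = w" for w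
    unfolding R_def by (rule matrix_inv_mult_cancel[OF A_inj])
  have "u \<bullet> (p *\<^sub>R (M *v v) + g - (mu *\<^sub>R v + m *\<^sub>R u)) = 0" by (simp add: eq)
  moreover have "u \<bullet> (M *v v) = 0"
    by (simp add: inner_matrix_vector_symmetric[OF sym] Mu orth)
  ultimately show m: "m = u \<bullet> g"
    by (simp add: inner_add_right inner_diff_right orth unit)
  have Au: "A *v u = (mu - c) *\<^sub>R u"
    by (simp add: A_mult Mu algebra_simps)
  have "u \<noteq> 0" using unit by auto
  then have mu_c: "mu - c \<noteq> 0"
    using A_inj Au by force
  have "(mu - c) *\<^sub>R (R *v u) = u"
    using R_A[of u] by (simp add: Au matrix_vector_mult_scaleR)
  then have Ru: "R *v u = (1 / (mu - c)) *\<^sub>R u"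
    using mu_c by (metis divide_inverse_commute divide_self_if mult_1 scaleR_one scaleR_scaleR)
  have "A *v v = (m / p) *\<^sub>R u - (1 / p) *\<^sub>R g"
  proof -
    have "p *\<^sub>R (M *v v) = mu *\<^sub>R v + m *\<^sub>R u - g"
      using eq by (simp add: algebra_simps)
    then have "(1 / p) *\<^sub>R (p *\<^sub>R (M *v v)) = (1 / p) *\<^sub>R (mu *\<^sub>R v + m *\<^sub>R u - g)"
      by simp
    then have "M *v v = (1 / p) *\<^sub>R (mu *\<^sub>R v + m *\<^sub>R u - g)"
      using p by simp
    then show ?thesis
      by (simp add: A_mult c_def algebra_simps)
  qed
  then have "v = (m / p) *\<^sub>R (R *v u) - (1 / p) *\<^sub>R (R *v g)"
    using R_A[of v] by (simp add: matrix_vector_mult_diff_distrib matrix_vector_mult_scaleR)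
  also have "(m / p) *\<^sub>R (R *v u) = (m / ((p - 1) * mu)) *\<^sub>R u"
    using p mu_c by (simp add: Ru c_def field_simps)
  finally show "v = - (1 / p) *\<^sub>R (matrix_inv (M - (mu / p) *\<^sub>R mat 1) *v g) + (m / ((p - 1) * mu)) *\<^sub>R u"
    by (simp add: R_def A_def c_def)
qed

lemma eigen_equation_deriv_eq_0:
  fixes x :: "real^'n::finite" and enum :: "'m::finite \<Rightarrow> 'n multiset"
  assumes d: "d \<ge> 3" and eig: "is_eigenpair d (spiked_tensor lam x enum w) mu u"
    and simple: "\<not> is_eigenvalue (tcontr_mat d (spiked_tensor lam x enum w) u) (mu / (real d - 1))"
    and zero: "eigen_equation_deriv lam x enum d (w, mu, u) (hw, hmu, hu) = 0"
  shows "hmu = u \<bullet> tcontr_vec d (W_entry enum hw) u / sqrt (real CARD('n))"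
    and "hu = - (1 / ((real d - 1) * sqrt (real CARD('n)))) *\<^sub>R
              (matrix_inv (tcontr_mat d (spiked_tensor lam x enum w) u - (mu / (real d - 1)) *\<^sub>R mat 1)
                 *v tcontr_vec d (W_entry enum hw) u)
            + (hmu / ((real d - 2) * mu)) *\<^sub>R u"
proof -
  define M where "M = tcontr_mat d (spiked_tensor lam x enum w) u"
  define g where "g = tcontr_vec d (W_entry enum hw) u /\<^sub>R sqrt (real CARD('n))"
  have unit: "u \<bullet> u = 1" and Mu: "M *v u = mu *\<^sub>R u"
    using eig d by (simp_all add: is_eigenpair_def norm_eq_1 M_def tcontr_mat_mult_self symmetric_spiked_tensor)
  have sym: "transpose M = M"
    by (simp add: M_def transpose_tcontr_mat symmetric_spiked_tensor)
  have p: "real d - 1 \<noteq> 0" using d by simp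
  have "(real d - 1) *\<^sub>R (M *v hu) + g - (mu *\<^sub>R hu + hmu *\<^sub>R u) = 0" and "u \<bullet> hu = 0"
    using zero by (simp_all add: eigen_equation_deriv_def M_def g_def zero_prod_def)
  note perturbation = eigenpair_perturbation[OF sym Mu unit p simple[folded M_def] this]
  show "hmu = u \<bullet> tcontr_vec d (W_entry enum hw) u / sqrt (real CARD('n))"
    using perturbation(1) by (simp add: g_def divide_inverse_commute)
  show "hu = - (1 / ((real d - 1) * sqrt (real CARD('n)))) *\<^sub>R
              (matrix_inv (tcontr_mat d (spiked_tensor lam x enum w) u - (mu / (real d - 1)) *\<^sub>R mat 1)
                 *v tcontr_vec d (W_entry enum hw) u)
            + (hmu / ((real d - 2) * mu)) *\<^sub>R u"
  proof -
    have "sqrt (real CARD('n)) > 0" by simp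
    then have "(1 / (real d - 1)) *\<^sub>R (matrix_inv (M - (mu / (real d - 1)) *\<^sub>R mat 1) *v g)
        = (1 / ((real d - 1) * sqrt (real CARD('n)))) *\<^sub>R
            (matrix_inv (M - (mu / (real d - 1)) *\<^sub>R mat 1) *v tcontr_vec d (W_entry enum hw) u)"
      by (simp add: g_def matrix_vector_mult_scaleR field_simps)
    then show ?thesis
      using perturbation(2) by (simp add: M_def)
  qed
qed

lemma inj_eigen_equation_deriv:
  fixes x :: "real^'n::finite" and enum :: "'m::finite \<Rightarrow> 'n multiset"
  assumes d: "d \<ge> 3" and eig: "is_eigenpair d (spiked_tensor lam x enum w) mu u"
    and simple: "\<not> is_eigenvalue (tcontr_mat d (spiked_tensor lam x enum w) u) (mu / (real d - 1))"
  shows "inj (\<lambda>k. eigen_equation_deriv lam x enum d (w, mu, u) (0, k))"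
proof -
  have "(eigen_equation lam x enum d has_derivative eigen_equation_deriv lam x enum d (w, mu, u)) (at (w, mu, u))"
    using C1_eigen_equation[of d lam x enum] d unfolding C1_def by simp
  then have "bounded_linear (eigen_equation_deriv lam x enum d (w, mu, u))"
    by (rule has_derivative_bounded_linear)
  then have "linear (\<lambda>k. eigen_equation_deriv lam x enum d (w, mu, u) (0, k))"
    using bounded_linear_compose[OF _ bounded_linear_Pair[OF bounded_linear_zero bounded_linear_ident]]
    by (blast intro: bounded_linear.linear)
  moreover have "k = 0" if "eigen_equation_deriv lam x enum d (w, mu, u) (0, k) = 0" for k
  proof (cases k)
    case (Pair hmu hu)
    have "W_entry enum 0 = (\<lambda>xs. 0)"
      by (simp add: W_entry_def fun_eq_iff)
    then show ?thesis
      using eigen_equation_deriv_eq_0[OF d eig simple that[unfolded Pair]] by (simp add: Pair zero_prod_def)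
  qed
  ultimately show ?thesis
    by (simp add: linear_inj_iff_eq_0)
qed

lemma eigen_equation_deriv_axis_eq_0:
  fixes x :: "real^'n::finite" and enum :: "'m::finite \<Rightarrow> 'n multiset"
  assumes d: "d \<ge> 3" and enum: "bij_betw enum UNIV {M. size M = d}"
    and eig: "is_eigenpair d (spiked_tensor lam x enum w) mu u"
    and simple: "\<not> is_eigenvalue (tcontr_mat d (spiked_tensor lam x enum w) u) (mu / (real d - 1))"
    and i: "length i = d"
    and zero: "eigen_equation_deriv lam x enum d (w, mu, u) (axis (idx enum i) 1, hmu, hu) = 0"
  shows "hmu = 1 / (sigma2 i * sqrt (real CARD('n))) * (\<Prod>j\<leftarrow>i. u $ j)"
    and "hu = - (1 / ((real d - 1) * sqrt (real CARD('n)))) *\<^sub>R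
              (matrix_inv (tcontr_mat d (spiked_tensor lam x enum w) u - (mu / (real d - 1)) *\<^sub>R mat 1)
                 *v phi_vec d u i)
            + (hmu / ((real d - 2) * mu)) *\<^sub>R u"
proof -
  have "u \<bullet> phi_vec d u i = (\<Prod>j\<leftarrow>i. u $ j) / sigma2 i"
    using inner_tcontr_vec_W_entry_axis[OF enum i] tcontr_vec_W_entry_axis[OF enum i] d by simp
  then show "hmu = 1 / (sigma2 i * sqrt (real CARD('n))) * (\<Prod>j\<leftarrow>i. u $ j)"
    and "hu = - (1 / ((real d - 1) * sqrt (real CARD('n)))) *\<^sub>R
              (matrix_inv (tcontr_mat d (spiked_tensor lam x enum w) u - (mu / (real d - 1)) *\<^sub>R mat 1)
                 *v phi_vec d u i)
            + (hmu / ((real d - 2) * mu)) *\<^sub>R u"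
    using eigen_equation_deriv_eq_0[OF d eig simple zero] d
    by (simp_all add: tcontr_vec_W_entry_axis[OF enum i])
qed

section \<open>The implicit function theorem\<close>

lemma continuous_on_inv_blinfun_apply:
  fixes A :: "'b::metric_space \<Rightarrow> ('a::euclidean_space \<Rightarrow>\<^sub>L 'a)"
  assumes cA: "continuous_on S A" and bij: "\<And>s. s \<in> S \<Longrightarrow> bij (blinfun_apply (A s))"
  shows "continuous_on S (\<lambda>s. inv (blinfun_apply (A s)) h)"
  unfolding continuous_on_def
proof
  fix s0 assume s0: "s0 \<in> S"
  define D where "D s = inv (blinfun_apply (A s)) h" for s
  define B where "B = inv (blinfun_apply (A s0))"
  have "bounded_linear B"
    unfolding B_def using bij[OF s0]
    by (intro inj_linear_imp_inv_bounded_linear) (auto simp: bij_def blinfun.bounded_linear_right)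
  then obtain C where C: "C > 0" "\<And>y. norm (B y) \<le> norm y * C"
    using bounded_linear.pos_bounded by blast
  have AD: "A s (D s) = h" if "s \<in> S" for s
    unfolding D_def using bij[OF that] by (simp add: bij_def surj_f_inv_f)
  have BA: "B (A s0 y) = y" for y
    unfolding B_def using bij[OF s0] by (simp add: bij_def inv_f_f)
  have est: "norm (D s - D s0) \<le> C * norm (A s - A s0) * norm (D s)" if "s \<in> S" for s
  proof -
    have "D s - D s0 = B ((A s0 - A s) (D s))"
      using BA[of "D s - D s0"] AD[OF that] AD[OF s0] by (simp add: blinfun.diff_right blinfun.diff_left)
    then have "norm (D s - D s0) \<le> norm ((A s0 - A s) (D s)) * C" using C(2) by simp
    also have "\<dots> \<le> norm (A s0 - A s) * norm (D s) * C"
      using C(1) norm_blinfun by (intro mult_right_mono) auto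
    finally show ?thesis by (simp add: norm_minus_commute algebra_simps)
  qed
  have nA: "((\<lambda>s. norm (A s - A s0)) \<longlongrightarrow> 0) (at s0 within S)"
    using cA s0 unfolding continuous_on_def using tendsto_norm_zero LIM_zero by blast
  have small: "eventually (\<lambda>s. C * norm (A s - A s0) \<le> 1 / 2) (at s0 within S)"
    using order_tendstoD(2)[OF nA, of "1 / (2 * C)"] C(1)
    by (auto elim!: eventually_mono simp: field_simps)
  have "eventually (\<lambda>s. s \<in> S) (at s0 within S)"
    by (simp add: eventually_at_filter)
  then have "eventually (\<lambda>s. norm (D s - D s0) \<le> 2 * C * norm (D s0) * norm (A s - A s0)) (at s0 within S)"
    using small
  proof eventually_elim
    case (elim s)
    let ?x = "norm (D s - D s0)" and ?t = "C * norm (A s - A s0)"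
    have "norm (D s) \<le> norm (D s0) + ?x"
      by (metis add.commute diff_add_cancel norm_triangle_ineq)
    then have "?x \<le> ?t * (norm (D s0) + ?x)"
      using est[OF elim(1)] C(1) by (smt (verit) mult.assoc mult_left_mono norm_ge_zero mult_nonneg_nonneg)
    moreover have "?t * ?x \<le> ?x / 2"
      using elim(2) by (simp add: mult_right_mono[of _ "1/2" ?x, simplified])
    ultimately show ?case by (simp add: algebra_simps)
  qed
  moreover have "((\<lambda>s. 2 * C * norm (D s0) * norm (A s - A s0)) \<longlongrightarrow> 0) (at s0 within S)"
    using tendsto_mult_right_zero[OF nA] by simp
  ultimately have "((\<lambda>s. D s - D s0) \<longlongrightarrow> 0) (at s0 within S)"
    by (rule Lim_null_comparison)
  then show "((\<lambda>s. inv (blinfun_apply (A s)) h) \<longlongrightarrow> inv (blinfun_apply (A s0)) h) (at s0 within S)"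
    unfolding D_def LIM_zero_iff .
qed

lemma blinfun_left_inverse:
  fixes L :: "'a::euclidean_space \<Rightarrow>\<^sub>L 'b::euclidean_space"
  assumes "inj (blinfun_apply L)"
  obtains B where "B o\<^sub>L L = id_blinfun"
proof -
  obtain g where "linear g" "g \<circ> blinfun_apply L = id"
    using linear_injective_left_inverse[OF bounded_linear.linear[OF blinfun.bounded_linear_right] assms] by blast
  then have "Blinfun g o\<^sub>L L = id_blinfun"
    by (intro blinfun_eqI) (simp add: bounded_linear_Blinfun_apply linear_conv_bounded_linear pointfree_idE)
  then show thesis by (rule that)
qed

lemma frechet_derivative_bounded_linear_compose:
  assumes "bounded_linear L" and "f differentiable (at w)"
  shows "(\<lambda>w. L (f w)) differentiable (at w)"
    and "frechet_derivative (\<lambda>w. L (f w)) (at w) = (\<lambda>h. L (frechet_derivative f (at w) h))"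
proof -
  have "((\<lambda>w. L (f w)) has_derivative (\<lambda>h. L (frechet_derivative f (at w) h))) (at w)"
    using bounded_linear.has_derivative[OF assms(1) assms(2)[unfolded frechet_derivative_works]] .
  then show "(\<lambda>w. L (f w)) differentiable (at w)"
    and "frechet_derivative (\<lambda>w. L (f w)) (at w) = (\<lambda>h. L (frechet_derivative f (at w) h))"
    by (auto simp: differentiable_def frechet_derivative_at[symmetric])
qed

lemma inj_graph_map:
  fixes L :: "'a::real_vector \<times> 'b::real_vector \<Rightarrow> 'c::real_vector"
  assumes "linear L" and "inj (\<lambda>k. L (0, k))"
  shows "inj (\<lambda>h. (fst h, L h))"
proof -
  have "linear (\<lambda>h. (fst h, L h))"
    using assms(1) by (intro linearI) (auto simp: linear_add linear_scale)
  moreover have "h = 0" if "(fst h, L h) = 0" for h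
  proof (cases h)
    case (Pair a k)
    then have "a = 0" and "L (0, k) = L (0, 0)"
      using that linear_0[OF assms(1)] by (auto simp: zero_prod_def)
    then show ?thesis
      using injD[OF assms(2)] by (simp add: Pair zero_prod_def)
  qed
  ultimately show ?thesis
    by (simp add: linear_inj_iff_eq_0)
qed

lemma graph_map_local_inverse:
  fixes F :: "'a::euclidean_space \<times> 'b::euclidean_space \<Rightarrow> 'b"
  assumes C1: "C1 F F'" and inj: "inj (\<lambda>k. F' (w0, y0) (0, k))"
  obtains V g L where "open V" "(w0, F (w0, y0)) \<in> V" "g (w0, F (w0, y0)) = (w0, y0)"
    and "\<And>y. y \<in> V \<Longrightarrow> (fst (g y), F (g y)) = y"
    and "continuous_on V g" and "continuous_on UNIV L"
    and "\<And>z h. blinfun_apply (L z) h = (fst h, F' z h)"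
    and "\<And>y. y \<in> V \<Longrightarrow> bij (blinfun_apply (L (g y)))"
    and "\<And>y. y \<in> V \<Longrightarrow> (g has_derivative inv (blinfun_apply (L (g y)))) (at y)"
proof -
  define z0 where "z0 = (w0, y0)"
  define \<Phi> where "\<Phi> z = (fst z, F z)" for z
  define \<Phi>' where "\<Phi>' z h = (fst h, F' z h)" for z h
  have C1_\<Phi>: "C1 \<Phi> \<Phi>'"
    unfolding \<Phi>_def[abs_def] \<Phi>'_def[abs_def] by (rule C1_Pair[OF C1_linear[OF bounded_linear_fst] C1])
  then have der: "(\<Phi> has_derivative \<Phi>' z) (at z)" for z
    unfolding C1_def by blast
  define L where "L z = Blinfun (\<Phi>' z)" for z
  have L: "blinfun_apply (L z) = \<Phi>' z" for z
    unfolding L_def using der has_derivative_bounded_linear bounded_linear_Blinfun_apply by blast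
  have "continuous_on UNIV (\<lambda>z. \<Phi>' z h)" for h
    using C1_\<Phi> unfolding C1_def by blast
  then have cont_L: "continuous_on UNIV L"
    by (intro continuous_on_blinfun_componentwise) (simp add: L)
  have "linear (F' z0)"
    using C1 has_derivative_linear unfolding C1_def by blast
  then have "inj (blinfun_apply (L z0))"
    using inj_graph_map[OF _ inj] by (simp add: L \<Phi>'_def[abs_def] z0_def)
  then obtain B where "B o\<^sub>L L z0 = id_blinfun"
    by (rule blinfun_left_inverse)
  from inverse_function_theorem[OF open_UNIV _ cont_L UNIV_I this]
  obtain U' V g g' where "open V" "\<Phi> z0 \<in> V" "z0 \<in> U'" and hom: "homeomorphism U' V \<Phi> g"
    and "\<And>y. y \<in> V \<Longrightarrow> (g has_derivative g' y) (at y)"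
    and "\<And>y. y \<in> V \<Longrightarrow> g' y = inv (blinfun_apply (L (g y)))"
    and "\<And>y. y \<in> V \<Longrightarrow> bij (blinfun_apply (L (g y)))"
    using der L by metis
  note inverse = this
  show thesis
  proof (rule that[of V g L])
    show "open V" "(w0, F (w0, y0)) \<in> V"
      using inverse(1,2) by (simp_all add: \<Phi>_def z0_def)
    show "g (w0, F (w0, y0)) = (w0, y0)" and "continuous_on V g"
      using hom \<open>z0 \<in> U'\<close> unfolding homeomorphism_def \<Phi>_def z0_def by auto
    show "(fst (g y), F (g y)) = y" if "y \<in> V" for y
      using hom that unfolding homeomorphism_def \<Phi>_def by auto
    show "continuous_on UNIV L" and "blinfun_apply (L z) h = (fst h, F' z h)" for z h
      using cont_L by (simp_all add: L \<Phi>'_def)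
    show "bij (blinfun_apply (L (g y)))" and "(g has_derivative inv (blinfun_apply (L (g y)))) (at y)"
      if "y \<in> V" for y
      using inverse(5-7) that by auto
  qed
qed

lemma implicit_function:
  fixes F :: "'a::euclidean_space \<times> 'b::euclidean_space \<Rightarrow> 'b"
  assumes C1: "C1 F F'" and inj: "inj (\<lambda>k. F' (w0, y0) (0, k))"
  obtains S f where "open S" "w0 \<in> S" "f w0 = y0"
    and "\<And>w. w \<in> S \<Longrightarrow> F (w, f w) = F (w0, y0)"
    and "\<And>w. w \<in> S \<Longrightarrow> f differentiable (at w)"
    and "\<And>h. continuous_on S (\<lambda>w. frechet_derivative f (at w) h)"
    and "\<And>w h. w \<in> S \<Longrightarrow> F' (w, f w) (h, frechet_derivative f (at w) h) = 0"
proof -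
  obtain V g L where "open V" and z0: "(w0, F (w0, y0)) \<in> V" "g (w0, F (w0, y0)) = (w0, y0)"
    and g_inv: "\<And>y. y \<in> V \<Longrightarrow> (fst (g y), F (g y)) = y"
    and cont_g: "continuous_on V g" and cont_L: "continuous_on UNIV L"
    and L: "\<And>z h. blinfun_apply (L z) h = (fst h, F' z h)"
    and bij: "\<And>y. y \<in> V \<Longrightarrow> bij (blinfun_apply (L (g y)))"
    and der_g: "\<And>y. y \<in> V \<Longrightarrow> (g has_derivative inv (blinfun_apply (L (g y)))) (at y)"
    using graph_map_local_inverse[OF C1 inj] by blast
  define c where "c = F (w0, y0)"
  define S where "S = (\<lambda>w. (w, c)) -` V"
  define f where "f w = snd (g (w, c))" for w
  have V: "(w, c) \<in> V" if "w \<in> S" for w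
    using that by (simp add: S_def)
  have g_graph: "g (w, c) = (w, f w)" if "w \<in> S" for w
    using g_inv[OF V[OF that]] by (simp add: f_def prod_eq_iff)
  have F_f: "F (w, f w) = c" if "w \<in> S" for w
    using g_inv[OF V[OF that]] by (simp add: g_graph[OF that])
  define D where "D w h = inv (blinfun_apply (L (g (w, c)))) (h, 0)" for w h
  have der_f: "(f has_derivative (\<lambda>h. snd (D w h))) (at w)" if "w \<in> S" for w
  proof -
    have "((\<lambda>w. (w, c)) has_derivative (\<lambda>h. (h, 0))) (at w)"
      by (auto intro!: derivative_eq_intros simp: zero_prod_def)
    from has_derivative_compose[OF this der_g[OF V[OF that]]]
    show ?thesis
      unfolding f_def D_def by (rule has_derivative_snd)
  qed
  then have fd: "frechet_derivative f (at w) h = snd (D w h)" if "w \<in> S" for w h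
    using frechet_derivative_at that by metis
  show thesis
  proof
    show "open S"
      unfolding S_def by (rule continuous_open_vimage[OF \<open>open V\<close>]) (intro continuous_intros)
    show "w0 \<in> S" and "f w0 = y0"
      using z0 by (simp_all add: S_def f_def c_def)
    show "F (w, f w) = F (w0, y0)" if "w \<in> S" for w
      using F_f[OF that] by (simp add: c_def)
    show "f differentiable (at w)" if "w \<in> S" for w
      using der_f[OF that] by (auto simp: differentiable_def)
    show "F' (w, f w) (h, frechet_derivative f (at w) h) = 0" if "w \<in> S" for w h
    proof -
      have "blinfun_apply (L (w, f w)) (D w h) = (h, 0)"
        using bij[OF V[OF that]] unfolding D_def g_graph[OF that] by (simp add: bij_is_surj surj_f_inv_f)
      then have "fst (D w h) = h" and "F' (w, f w) (D w h) = 0"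
        by (simp_all add: L prod_eq_iff)
      then show ?thesis
        unfolding fd[OF that] by (metis prod.collapse)
    qed
    show "continuous_on S (\<lambda>w. frechet_derivative f (at w) h)" for h
    proof -
      have "continuous_on S (\<lambda>w. (w, c))"
        by (intro continuous_intros)
      with cont_g have "continuous_on S (\<lambda>w. g (w, c))"
        by (rule continuous_on_compose2) (use V in \<open>auto simp: image_subset_iff\<close>)
      then have "continuous_on S (\<lambda>w. L (g (w, c)))"
        by (rule continuous_on_compose2[OF cont_L]) simp
      then have "continuous_on S (\<lambda>w. D w h)"
        unfolding D_def using bij V by (intro continuous_on_inv_blinfun_apply) auto
      then show ?thesis
        by (rule continuous_on_eq[OF continuous_on_snd]) (simp add: fd)
    qed
  qed
qed

theorem mainTheorem7:
  fixes d :: nat and lam :: real and x :: "real^'n::finite"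
    and enum :: "'m::finite \<Rightarrow> 'n multiset" and w0 :: "real^'m"
    and mu :: real and u :: "real^'n"
  assumes "d \<ge> 3"
    and "bij_betw enum UNIV {M. size M = d}"
    and "is_eigenpair d (spiked_tensor lam x enum w0) mu u"
    and "mu \<noteq> 0"
    and "\<not> is_eigenvalue (tcontr_mat d (spiked_tensor lam x enum w0) u) (mu / (real d - 1))"
  shows "\<exists>S muf uf. open S \<and> w0 \<in> S \<and> muf w0 = mu \<and> uf w0 = u
    \<and> (\<forall>w\<in>S. is_eigenpair d (spiked_tensor lam x enum w) (muf w) (uf w))
    \<and> (\<forall>w\<in>S. muf differentiable (at w) \<and> uf differentiable (at w))
    \<and> (\<forall>k. continuous_on S (\<lambda>w. frechet_derivative muf (at w) (axis k 1))
          \<and> continuous_on S (\<lambda>w. frechet_derivative uf (at w) (axis k 1)))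
    \<and> (\<forall>i. length i = d \<longrightarrow>
         (let Rbar = matrix_inv (tcontr_mat d (spiked_tensor lam x enum w0) u
                                  - (mu / (real d - 1)) *\<^sub>R mat 1);
              dmu = frechet_derivative muf (at w0) (axis (idx enum i) 1)
          in dmu = 1 / (sigma2 i * sqrt (real CARD('n))) * (\<Prod>j\<leftarrow>i. u $ j)
           \<and> frechet_derivative uf (at w0) (axis (idx enum i) 1)
               = - (1 / ((real d - 1) * sqrt (real CARD('n)))) *\<^sub>R (Rbar *v phi_vec d u i)
                 + (dmu / ((real d - 2) * mu)) *\<^sub>R u))"
proof -
  note eig = assms(3) and simple = assms(5)
  have "C1 (eigen_equation lam x enum d) (eigen_equation_deriv lam x enum d)"
    using assms(1) by (intro C1_eigen_equation) simp
  from implicit_function[OF this inj_eigen_equation_deriv[OF assms(1) eig simple]]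
  obtain S f where "open S" "w0 \<in> S" "f w0 = (mu, u)"
    and eq: "\<And>w. w \<in> S \<Longrightarrow> eigen_equation lam x enum d (w, f w) = eigen_equation lam x enum d (w0, mu, u)"
    and diff: "\<And>w. w \<in> S \<Longrightarrow> f differentiable (at w)"
    and cont: "\<And>h. continuous_on S (\<lambda>w. frechet_derivative f (at w) h)"
    and deriv_eq: "\<And>w h. w \<in> S \<Longrightarrow> eigen_equation_deriv lam x enum d (w, f w) (h, frechet_derivative f (at w) h) = 0"
    by blast
  define muf where "muf w = fst (f w)" for w
  define uf where "uf w = snd (f w)" for w
  have muf': "muf differentiable (at w)" "frechet_derivative muf (at w) h = fst (frechet_derivative f (at w) h)"
    and uf': "uf differentiable (at w)" "frechet_derivative uf (at w) h = snd (frechet_derivative f (at w) h)"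
    if "w \<in> S" for w h
    unfolding muf_def[abs_def] uf_def[abs_def]
    using frechet_derivative_bounded_linear_compose[OF bounded_linear_fst diff[OF that]]
      frechet_derivative_bounded_linear_compose[OF bounded_linear_snd diff[OF that]] by auto
  have "is_eigenpair d (spiked_tensor lam x enum w) (muf w) (uf w)" if "w \<in> S" for w
    using eq[OF that] eig by (simp add: is_eigenpair_iff_eigen_equation muf_def uf_def)
  moreover have "continuous_on S (\<lambda>w. frechet_derivative muf (at w) h)
      \<and> continuous_on S (\<lambda>w. frechet_derivative uf (at w) h)" for h
    using continuous_on_fst[OF cont[of h]] continuous_on_snd[OF cont[of h]]
    by (auto elim!: continuous_on_eq simp: muf' uf')
  moreover have "frechet_derivative muf (at w0) (axis (idx enum i) 1)
        = 1 / (sigma2 i * sqrt (real CARD('n))) * (\<Prod>j\<leftarrow>i. u $ j)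
      \<and> frechet_derivative uf (at w0) (axis (idx enum i) 1)
        = - (1 / ((real d - 1) * sqrt (real CARD('n)))) *\<^sub>R
            (matrix_inv (tcontr_mat d (spiked_tensor lam x enum w0) u - (mu / (real d - 1)) *\<^sub>R mat 1)
               *v phi_vec d u i)
          + (frechet_derivative muf (at w0) (axis (idx enum i) 1) / ((real d - 2) * mu)) *\<^sub>R u"
    if "length i = d" for i
  proof -
    obtain hmu hu where D: "frechet_derivative f (at w0) (axis (idx enum i) 1) = (hmu, hu)"
      by (cases "frechet_derivative f (at w0) (axis (idx enum i) 1)")
    have "eigen_equation_deriv lam x enum d (w0, mu, u) (axis (idx enum i) 1, hmu, hu) = 0"
      using deriv_eq[OF \<open>w0 \<in> S\<close>, of "axis (idx enum i) 1"] by (simp add: \<open>f w0 = (mu, u)\<close> D)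
    from eigen_equation_deriv_axis_eq_0[OF assms(1,2) eig simple that this]
    show ?thesis by (simp add: muf' uf' \<open>w0 \<in> S\<close> D)
  qed
  moreover have "muf w0 = mu" "uf w0 = u"
    by (simp_all add: muf_def uf_def \<open>f w0 = (mu, u)\<close>)
  ultimately show ?thesis
    using \<open>open S\<close> \<open>w0 \<in> S\<close> muf'(1) uf'(1)
    by (intro exI[of _ S] exI[of _ muf] exI[of _ uf]) (simp add: Let_def)
qed

end
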